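(* Let $(x(n))_{n\geq0}$ and $(y(n))_{n\geq0}$ be strictly increasing sequences of nonnegative integers such that $\{x(n): n\geq 0\} \cup \{y(n): n \geq 0\} = \mathbb{N}$, $x(0)=1$, $y(0)=0$, and for all $n \geq 0$, $$x(x(n)) = y(x(n)) - 1 \quad\text{and}\quad y(y(n)) = x(y(n)) - 1.$$ Then $x(n) = a(n)$ and $y(n) = b(n)$ for all $n \geq 0$.
   Context: $\mathbb{N} = \{0,1,2,\ldots\}$. A nonnegative integer is odious if the sum of its binary digits is odd and evil if it is even. $(a(n))_{n\geq0}$ is the increasing sequence of odious numbers and $(b(n))_{n\geq 0}$ the increasing sequence of evil numbers, both indexed from $0$. *)

theory Defs
  imports Main "HOL-Library.Infinite_Set"
begin

fun bin_digit_sum :: "nat \<Rightarrow> nat" where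
  "bin_digit_sum n = (if n = 0 then 0 else n mod 2 + bin_digit_sum (n div 2))"

declare bin_digit_sum.simps[simp del]

definition odious :: "nat \<Rightarrow> bool" where
  "odious n \<longleftrightarrow> odd (bin_digit_sum n)"

definition evil :: "nat \<Rightarrow> bool" where
  "evil n \<longleftrightarrow> even (bin_digit_sum n)"

text \<open>Increasing enumerations, indexed from 0.\<close>
definition odious_seq :: "nat \<Rightarrow> nat" where
  "odious_seq = enumerate {n. odious n}"

definition evil_seq :: "nat \<Rightarrow> nat" where
  "evil_seq = enumerate {n. evil n}"

end

theory Submission
  imports Defs
begin

(* For a pair (x, y) as in the theorem, the two functional equations say that
   y m = x m + 1 for m in the range of x, and x m = y m + 1 for m in the range
   of y.  Since the ranges cover all of \<nat>, the values x m and y m are always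
   adjacent, and the ranges are disjoint.  An induction on n then shows that
   {x n, y n} = {2n, 2n+1}, with the smaller value 2n taken by x exactly when
   n lies in the range of x.  Consequently the range of x contains 2m iff it
   contains m, and 2m+1 iff it does not contain m; together with 0 \<notin> range x,
   these are exactly the recursion rules of the odious numbers.  Hence
   range x = odious and range y = evil, and a strictly increasing function is
   the increasing enumeration of its range. *)

lemma strict_mono_range_eq:
  fixes f g :: "nat \<Rightarrow> 'a::linorder"
  assumes f: "strict_mono f" and g: "strict_mono g" and ranges: "range f = range g"
  shows "f = g"
proof
  fix n
  show "f n = g n"
  proof (induction n rule: less_induct)
    case (less n)
    (* If one function were smaller at n, its value there would be attained
       by the other one at an earlier index, where both agree. *)
    have no_smaller: False
      if mono_u: "strict_mono u" and mono_v: "strict_mono v"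
        and sub: "range u \<subseteq> range v" and agree: "\<forall>k<n. u k = v k"
        and less_n: "u n < v n" for u v :: "nat \<Rightarrow> 'a"
    proof -
      obtain m where m: "u n = v m" using sub by blast
      with mono_v less_n have "m < n" by (metis strict_mono_less)
      with agree m have "u m = u n" by simp
      with mono_u \<open>m < n\<close> show False by (simp add: strict_mono_eq)
    qed
    from less.IH have agree: "\<forall>k<n. f k = g k" "\<forall>k<n. g k = f k" by auto
    show ?case
    proof (rule ccontr)
      assume "f n \<noteq> g n"
      then consider "f n < g n" | "g n < f n" by (cases "f n < g n") auto
      then show False
      proof cases
        case 1
        from no_smaller[OF f g _ agree(1) this] ranges show False by simp
      next
        case 2
        from no_smaller[OF g f _ agree(2) this] ranges show False by simp
      qed
    qed
  qed
qed

lemma enumerate_range_strict_mono: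
  fixes f :: "nat \<Rightarrow> nat"
  assumes "strict_mono f"
  shows "enumerate (range f) = f"
proof -
  have "infinite (range f)"
    using assms by (simp add: range_inj_infinite strict_mono_imp_inj_on)
  then show ?thesis
    using strict_mono_range_eq[OF strict_mono_enumerate assms] range_enumerate by blast
qed

lemma bin_digit_sum_double: "k > 0 \<Longrightarrow> bin_digit_sum (2 * k) = bin_digit_sum k"
  by (subst bin_digit_sum.simps) simp

lemma bin_digit_sum_double_plus_one: "bin_digit_sum (2 * k + 1) = Suc (bin_digit_sum k)"
  by (subst bin_digit_sum.simps) simp

lemma odious_characterisation:
  fixes S :: "nat set"
  assumes zero: "0 \<notin> S"
    and double: "\<And>k. 2 * k \<in> S \<longleftrightarrow> k \<in> S"
    and double_plus_one: "\<And>k. 2 * k + 1 \<in> S \<longleftrightarrow> k \<notin> S"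
  shows "S = {n. odious n}"
proof -
  have "m \<in> S \<longleftrightarrow> odious m" for m
  proof (induction m rule: less_induct)
    case (less m)
    define k where "k = m div 2"
    have "m = 2 * k \<or> m = 2 * k + 1" unfolding k_def by presburger
    then consider "m = 0" | "m = 2 * k" "k > 0" | "m = 2 * k + 1" by fastforce
    then show ?case
    proof cases
      case 1
      then show ?thesis using zero by (simp add: odious_def bin_digit_sum.simps)
    next
      case 2
      then have "k < m" by simp
      have "m \<in> S \<longleftrightarrow> k \<in> S" using 2 double by simp
      also have "\<dots> \<longleftrightarrow> odious k" using less.IH[OF \<open>k < m\<close>] .
      also have "\<dots> \<longleftrightarrow> odious m" using 2 by (simp add: odious_def bin_digit_sum_double)
      finally show ?thesis .
    next
      case 3
      then have "k < m" by simp
      have "m \<in> S \<longleftrightarrow> k \<notin> S" using 3 double_plus_one by simp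
      also have "\<dots> \<longleftrightarrow> \<not> odious k" using less.IH[OF \<open>k < m\<close>] by simp
      also have "\<dots> \<longleftrightarrow> odious m"
        unfolding 3 odious_def bin_digit_sum_double_plus_one by simp
      finally show ?thesis .
    qed
  qed
  then show ?thesis by blast
qed

locale odious_evil_pair =
  fixes x y :: "nat \<Rightarrow> nat"
  assumes mono_x: "strict_mono x" and mono_y: "strict_mono y"
    and covers: "range x \<union> range y = UNIV"
    and x_0: "x 0 = 1" and y_0: "y 0 = 0"
    and eq_x: "\<And>n. x (x n) = y (x n) - 1"
    and eq_y: "\<And>n. y (y n) = x (y n) - 1"
begin

lemma x_positive: "1 \<le> x n"
  using mono_x x_0 by (metis le0 strict_mono_less_eq)

(* The functional equations, restated without truncated subtraction: on the
   range of one sequence, the other one is larger by exactly one. *)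
lemma y_on_range_x: "m \<in> range x \<Longrightarrow> y m = x m + 1"
proof -
  assume "m \<in> range x"
  then have "x m = y m - 1" using eq_x by blast
  with x_positive[of m] show ?thesis by linarith
qed

lemma x_on_range_y: "m \<in> range y \<Longrightarrow> x m = y m + 1"
proof -
  assume "m \<in> range y"
  then have "y m = x m - 1" using eq_y by blast
  with x_positive[of m] show ?thesis by linarith
qed

(* Since every m lies in one of the ranges, x m and y m always differ by one;
   in particular the two ranges cannot share a value. *)
lemma adjacent: "x m = y m + 1 \<or> y m = x m + 1"
  using covers y_on_range_x x_on_range_y by blast

lemma ranges_disjoint: "x i \<noteq> y j"
  using y_on_range_x[of "x i"] x_on_range_y[of "y j"] by auto

lemma min_values: "min (x n) (y n) = 2 * n"
proof (induction n)
  case 0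
  show ?case using x_0 y_0 by simp
next
  case (Suc n)
  have step: "x n < x (Suc n)" "y n < y (Suc n)"
    using mono_x mono_y by (simp_all add: strict_monoD)
  (* Both new values exceed 2n+1, since the old values occupy 2n and 2n+1. *)
  have lower: "2 * n + 2 \<le> x (Suc n)" "2 * n + 2 \<le> y (Suc n)"
    using step adjacent[of n] Suc.IH ranges_disjoint[of "Suc n" n] ranges_disjoint[of n "Suc n"]
    by auto
  (* The number 2n+2 is attained, necessarily at an index beyond n. *)
  obtain k where k: "x k = 2 * n + 2 \<or> y k = 2 * n + 2"
    using covers by (metis UNIV_I UnE imageE)
  have "Suc n \<le> k"
  proof (rule ccontr)
    assume "\<not> Suc n \<le> k"
    then have "x k \<le> x n" "y k \<le> y n"
      using mono_x mono_y by (simp_all add: strict_mono_less_eq)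
    then show False using k adjacent[of n] Suc.IH by auto
  qed
  then have "x (Suc n) \<le> x k" "y (Suc n) \<le> y k"
    using mono_x mono_y by (simp_all add: strict_mono_less_eq)
  with lower k show ?case by auto
qed

lemma values_in_range_x: "m \<in> range x \<Longrightarrow> x m = 2 * m \<and> y m = 2 * m + 1"
  using min_values[of m] y_on_range_x[of m] by simp

lemma values_outside_range_x: "m \<notin> range x \<Longrightarrow> x m = 2 * m + 1 \<and> y m = 2 * m"
  using min_values[of m] x_on_range_y[of m] covers by auto

lemma range_y_complement: "m \<in> range y \<longleftrightarrow> m \<notin> range x"
  using covers ranges_disjoint by blast

(* 2m and 2m+1 are the values of x and y at m, so they lie in opposite ranges,
   with 2m in the range of x exactly when m is. *)
lemma range_x_double:
  "(2 * m \<in> range x \<longleftrightarrow> m \<in> range x) \<and> (2 * m + 1 \<in> range x \<longleftrightarrow> m \<notin> range x)"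
proof (cases "m \<in> range x")
  case True
  have "x m = 2 * m" "y m = 2 * m + 1" using values_in_range_x[OF True] by simp_all
  moreover have "x m \<in> range x" "y m \<in> range y" by simp_all
  ultimately have "2 * m \<in> range x" "2 * m + 1 \<in> range y" by simp_all
  with True show ?thesis using range_y_complement[of "2 * m + 1"] by simp
next
  case False
  have "x m = 2 * m + 1" "y m = 2 * m" using values_outside_range_x[OF False] by simp_all
  moreover have "x m \<in> range x" "y m \<in> range y" by simp_all
  ultimately have "2 * m + 1 \<in> range x" "2 * m \<in> range y" by simp_all
  with False show ?thesis using range_y_complement[of "2 * m"] by simp
qed

lemma range_x_odious: "range x = {n. odious n}"
proof (rule odious_characterisation)
  show "0 \<notin> range x" using x_positive by (metis imageE le_zero_eq one_neq_zero)
qed (use range_x_double in auto)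

lemma range_y_evil: "range y = {n. evil n}"
  using range_y_complement range_x_odious by (auto simp: odious_def evil_def)

end

theorem theorem5:
  fixes x y :: "nat \<Rightarrow> nat"
  assumes "strict_mono x" and "strict_mono y"
    and "range x \<union> range y = UNIV"
    and "x 0 = 1" and "y 0 = 0"
    and "\<And>n. x (x n) = y (x n) - 1"
    and "\<And>n. y (y n) = x (y n) - 1"
  shows "\<forall>n. x n = odious_seq n \<and> y n = evil_seq n"
proof -
  interpret odious_evil_pair x y
    using assms by unfold_locales
  have "odious_seq = x"
    unfolding odious_seq_def range_x_odious[symmetric]
    using enumerate_range_strict_mono[OF mono_x] .
  moreover have "evil_seq = y"
    unfolding evil_seq_def range_y_evil[symmetric]
    using enumerate_range_strict_mono[OF mono_y] .
  ultimately show ?thesis by simp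
qed

end
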